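(* Let $I$ be an LBFLO instance with optimal solution $O$ of cost $Cost_I(O)$, and let $\delta\ge 0$. For each facility $i\in\mathcal{F}$ let $N_i$ be a set of $L_i$ clients nearest to $i$ (with respect to $c$). Let $I'$ be the FLO instance with the same facilities, clients, metric and outlier bound $t$ as $I$, with the lower bounds removed, and with opening costs $f'_i = f_i + \delta\sum_{j\in N_i} c(i,j)$. Then the optimal cost of $I'$ is at most $(1+\delta)\,Cost_I(O)$.
   Context: FLO: facilities $\mathcal{F}$, clients $\mathcal{C}$ with $|\mathcal{C}|=m$, opening costs $f_i\ge0$, metric $c$ on $\mathcal{F}\cup\mathcal{C}$, integer $t\ge0$; a feasible solution opens $F'\subseteq\mathcal{F}$ and assigns at least $m-t$ clients to facilities in $F'$, with cost $\sum_{i\in F'} f_i+\sum_{j\text{ assigned}} c(j,\sigma(j))$. LBFLO: additionally each $i\in\mathcal{F}$ has a nonnegative integer lower bound $L_i$, and every opened facility must be assigned at least $L_i$ clients. *)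

theory Defs
  imports Main "HOL-Library.Library"
begin

text \<open>Facilities and clients are points of a common type 'a; c is a (pseudo)metric on F \<union> C.\<close>

definition is_metric_on :: "'a set \<Rightarrow> ('a \<Rightarrow> 'a \<Rightarrow> real) \<Rightarrow> bool" where
  "is_metric_on X c \<longleftrightarrow>
     (\<forall>x\<in>X. c x x = 0) \<and>
     (\<forall>x\<in>X. \<forall>y\<in>X. c x y \<ge> 0 \<and> c x y = c y x) \<and>
     (\<forall>x\<in>X. \<forall>y\<in>X. \<forall>z\<in>X. c x z \<le> c x y + c y z)"

text \<open>A solution is a triple (F', A, \<sigma>): opened facilities F', assigned clients A,
  assignment \<sigma> (only its values on A matter).\<close>

definition flo_feasible ::
  "'a set \<Rightarrow> 'a set \<Rightarrow> nat \<Rightarrow> 'a set \<Rightarrow> 'a set \<Rightarrow> ('a \<Rightarrow> 'a) \<Rightarrow> bool" where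
  "flo_feasible F C t F' A \<sigma> \<longleftrightarrow>
     F' \<subseteq> F \<and> A \<subseteq> C \<and> card A \<ge> card C - t \<and> (\<forall>j\<in>A. \<sigma> j \<in> F')"

definition lbflo_feasible ::
  "'a set \<Rightarrow> 'a set \<Rightarrow> nat \<Rightarrow> ('a \<Rightarrow> nat) \<Rightarrow> 'a set \<Rightarrow> 'a set \<Rightarrow> ('a \<Rightarrow> 'a) \<Rightarrow> bool" where
  "lbflo_feasible F C t L F' A \<sigma> \<longleftrightarrow>
     flo_feasible F C t F' A \<sigma> \<and> (\<forall>i\<in>F'. card {j\<in>A. \<sigma> j = i} \<ge> L i)"

definition sol_cost ::
  "('a \<Rightarrow> real) \<Rightarrow> ('a \<Rightarrow> 'a \<Rightarrow> real) \<Rightarrow> 'a set \<Rightarrow> 'a set \<Rightarrow> ('a \<Rightarrow> 'a) \<Rightarrow> real" where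
  "sol_cost f c F' A \<sigma> = (\<Sum>i\<in>F'. f i) + (\<Sum>j\<in>A. c j (\<sigma> j))"

definition flo_opt ::
  "'a set \<Rightarrow> 'a set \<Rightarrow> ('a \<Rightarrow> real) \<Rightarrow> ('a \<Rightarrow> 'a \<Rightarrow> real) \<Rightarrow> nat \<Rightarrow> real" where
  "flo_opt F C f c t = Inf {sol_cost f c F' A \<sigma> | F' A \<sigma>. flo_feasible F C t F' A \<sigma>}"

definition lbflo_optimal ::
  "'a set \<Rightarrow> 'a set \<Rightarrow> ('a \<Rightarrow> real) \<Rightarrow> ('a \<Rightarrow> 'a \<Rightarrow> real) \<Rightarrow> nat \<Rightarrow> ('a \<Rightarrow> nat)
   \<Rightarrow> 'a set \<Rightarrow> 'a set \<Rightarrow> ('a \<Rightarrow> 'a) \<Rightarrow> bool" where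
  "lbflo_optimal F C f c t L F' A \<sigma> \<longleftrightarrow>
     lbflo_feasible F C t L F' A \<sigma> \<and>
     (\<forall>F'' A' \<sigma>'. lbflo_feasible F C t L F'' A' \<sigma>' \<longrightarrow>
        sol_cost f c F' A \<sigma> \<le> sol_cost f c F'' A' \<sigma>')"

definition nearest_clients :: "('a \<Rightarrow> 'a \<Rightarrow> real) \<Rightarrow> 'a set \<Rightarrow> 'a \<Rightarrow> nat \<Rightarrow> 'a set \<Rightarrow> bool" where
  "nearest_clients c C i l N \<longleftrightarrow>
     N \<subseteq> C \<and> card N = l \<and> (\<forall>j\<in>N. \<forall>j'\<in>C - N. c i j \<le> c i j')"

end

theory Submission
  imports Defs
begin

text \<open>The optimal solution O of the lower-bounded instance is itself feasible for the
  instance without lower bounds. Each facility i opened by O serves at least L i clients, and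
  N i consists of L i clients nearest to i, so the surcharge \<delta> times the sum of c(i,j) over
  N i is at most \<delta> times the connection cost of the clients i serves in O. Summing over the
  opened facilities, the modified cost of O is at most Cost(O) plus \<delta> times its connection
  cost, hence at most (1 + \<delta>) Cost(O).\<close>

lemma sum_le_sum_if_card_le:
  fixes g :: "'b \<Rightarrow> 'c::linordered_semidom"
  assumes "finite Y" "card X \<le> card Y"
    and "\<forall>x\<in>X. \<forall>y\<in>Y. g x \<le> g y" and "\<forall>y\<in>Y. g y \<ge> 0"
  shows "sum g X \<le> sum g Y"
proof (cases "finite X \<and> X \<noteq> {}")
  case False
  then show ?thesis
    using assms(4) by (auto simp: sum_nonneg)
next
  case True
  then have "Y \<noteq> {}"
    using assms(2) card_gt_0_iff by fastforce
  define m where "m = Min (g ` Y)"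
  have m_le: "\<forall>y\<in>Y. m \<le> g y"
    using assms(1) by (simp add: m_def)
  have "m \<in> g ` Y"
    using assms(1) \<open>Y \<noteq> {}\<close> by (simp add: m_def)
  then obtain y0 where "y0 \<in> Y" "m = g y0"
    by blast
  have "sum g X \<le> of_nat (card X) * m"
    using sum_mono[of X g "\<lambda>_. m"] assms(3) \<open>y0 \<in> Y\<close> \<open>m = g y0\<close> by simp
  also have "\<dots> \<le> of_nat (card Y) * m"
    using assms(2,4) \<open>y0 \<in> Y\<close> \<open>m = g y0\<close> by (intro mult_right_mono) auto
  also have "\<dots> \<le> sum g Y"
    using sum_mono[of Y "\<lambda>_. m" g] m_le by simp
  finally show ?thesis .
qed

lemma nearest_clients_sum_le:
  assumes "nearest_clients c C i l N" "finite C" "A \<subseteq> C" "l \<le> card A"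
    and "\<forall>j\<in>C. c i j \<ge> 0"
  shows "(\<Sum>j\<in>N. c i j) \<le> (\<Sum>j\<in>A. c i j)"
proof -
  have "N \<subseteq> C" "card N = l" and near: "\<forall>j\<in>N. \<forall>j'\<in>C - N. c i j \<le> c i j'"
    using assms(1) by (auto simp: nearest_clients_def)
  then have "finite N" "finite A"
    using assms(2,3) finite_subset by auto
  have "card (N - A) \<le> card (A - N)"
    using card_Diff_subset_Int[of N A] card_Diff_subset_Int[of A N] \<open>finite N\<close>
      \<open>card N = l\<close> assms(4)
    by (simp add: Int_commute)
  then have "(\<Sum>j\<in>N - A. c i j) \<le> (\<Sum>j\<in>A - N. c i j)"
    using near assms(3,5) \<open>finite A\<close> by (intro sum_le_sum_if_card_le) auto
  then show ?thesis
    using sum.Int_Diff[OF \<open>finite N\<close>, of "\<lambda>j. c i j" A]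
      sum.Int_Diff[OF \<open>finite A\<close>, of "\<lambda>j. c i j" N]
    by (simp add: Int_commute)
qed

lemma flo_opt_le_sol_cost:
  assumes "\<forall>i\<in>F. f i \<ge> 0" "\<forall>i\<in>F. \<forall>j\<in>C. c j i \<ge> 0"
    and "flo_feasible F C t F' A \<sigma>"
  shows "flo_opt F C f c t \<le> sol_cost f c F' A \<sigma>"
  unfolding flo_opt_def
proof (rule cInf_lower)
  show "bdd_below {sol_cost f c F' A \<sigma> | F' A \<sigma>. flo_feasible F C t F' A \<sigma>}"
  proof (rule bdd_belowI[where m = 0], clarify)
    fix F'' A' \<sigma>'
    assume "flo_feasible F C t F'' A' \<sigma>'"
    then show "0 \<le> sol_cost f c F'' A' \<sigma>'"
      using assms(1,2) unfolding sol_cost_def flo_feasible_def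
      by (intro add_nonneg_nonneg sum_nonneg) blast+
  qed
qed (use assms(3) in blast)

lemma sum_assignment_by_facility:
  assumes "finite A" "finite F'" "\<forall>j\<in>A. \<sigma> j \<in> F'"
  shows "(\<Sum>j\<in>A. g j (\<sigma> j)) = (\<Sum>i\<in>F'. \<Sum>j\<in>{j\<in>A. \<sigma> j = i}. g j i)"
proof -
  have "(\<Sum>j\<in>A. g j (\<sigma> j)) = (\<Sum>i\<in>F'. \<Sum>j\<in>{j\<in>A. \<sigma> j = i}. g j (\<sigma> j))"
    using assms by (intro sum.group[symmetric]) auto
  also have "\<dots> = (\<Sum>i\<in>F'. \<Sum>j\<in>{j\<in>A. \<sigma> j = i}. g j i)"
    by (intro sum.cong refl) auto
  finally show ?thesis .
qed

lemma lbflo_feasible_nearest_sum_le_connection_cost: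
  assumes "finite F" "finite C" "is_metric_on (F \<union> C) c"
    and "lbflo_feasible F C t L F' A \<sigma>"
    and "\<forall>i\<in>F. nearest_clients c C i (L i) (N i)"
  shows "(\<Sum>i\<in>F'. \<Sum>j\<in>N i. c i j) \<le> (\<Sum>j\<in>A. c j (\<sigma> j))"
proof -
  have met: "\<forall>x\<in>F \<union> C. \<forall>y\<in>F \<union> C. c x y \<ge> 0 \<and> c x y = c y x"
    using assms(3) by (simp add: is_metric_on_def)
  have "F' \<subseteq> F" "A \<subseteq> C" and assigned: "\<forall>j\<in>A. \<sigma> j \<in> F'"
    and lower: "\<forall>i\<in>F'. card {j\<in>A. \<sigma> j = i} \<ge> L i"
    using assms(4) by (auto simp: lbflo_feasible_def flo_feasible_def)
  then have "finite F'" "finite A"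
    using assms(1,2) by (meson finite_subset)+
  have "(\<Sum>i\<in>F'. \<Sum>j\<in>N i. c i j) \<le> (\<Sum>i\<in>F'. \<Sum>j\<in>{j\<in>A. \<sigma> j = i}. c i j)"
  proof (rule sum_mono)
    fix i
    assume "i \<in> F'"
    then show "(\<Sum>j\<in>N i. c i j) \<le> (\<Sum>j\<in>{j\<in>A. \<sigma> j = i}. c i j)"
      using assms(2,5) lower met \<open>F' \<subseteq> F\<close> \<open>A \<subseteq> C\<close>
      by (intro nearest_clients_sum_le[where C = C]) auto
  qed
  also have "\<dots> = (\<Sum>j\<in>A. c j (\<sigma> j))"
    using sum_assignment_by_facility[OF \<open>finite A\<close> \<open>finite F'\<close> assigned, of c]
      met \<open>F' \<subseteq> F\<close> \<open>A \<subseteq> C\<close>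
    by (auto intro!: sum.cong)
  finally show ?thesis .
qed

theorem lemma1:
  fixes F C :: "'a set" and f :: "'a \<Rightarrow> real" and c :: "'a \<Rightarrow> 'a \<Rightarrow> real"
    and t :: nat and L :: "'a \<Rightarrow> nat" and \<delta> :: real
    and OF OA :: "'a set" and O\<sigma> :: "'a \<Rightarrow> 'a" and N :: "'a \<Rightarrow> 'a set"
  assumes "finite F" and "finite C"
    and "\<forall>i\<in>F. f i \<ge> 0"
    and "is_metric_on (F \<union> C) c"
    and "lbflo_optimal F C f c t L OF OA O\<sigma>"
    and "\<delta> \<ge> 0"
    and "\<forall>i\<in>F. nearest_clients c C i (L i) (N i)"
  shows "flo_opt F C (\<lambda>i. f i + \<delta> * (\<Sum>j\<in>N i. c i j)) c t
           \<le> (1 + \<delta>) * sol_cost f c OF OA O\<sigma>"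
proof -
  define f' where "f' = (\<lambda>i. f i + \<delta> * (\<Sum>j\<in>N i. c i j))"
  define conn where "conn = (\<Sum>j\<in>OA. c j (O\<sigma> j))"
  have met: "\<forall>x\<in>F \<union> C. \<forall>y\<in>F \<union> C. c x y \<ge> 0"
    using assms(4) by (simp add: is_metric_on_def)
  have feasible: "lbflo_feasible F C t L OF OA O\<sigma>"
    using assms(5) by (simp add: lbflo_optimal_def)
  then have "OF \<subseteq> F"
    by (auto simp: lbflo_feasible_def flo_feasible_def)
  have "\<forall>i\<in>F. f' i \<ge> 0"
    using assms(3,6,7) met unfolding f'_def nearest_clients_def
    by (fastforce intro!: add_nonneg_nonneg mult_nonneg_nonneg sum_nonneg)
  then have "flo_opt F C f' c t \<le> sol_cost f' c OF OA O\<sigma>"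
    using feasible met by (intro flo_opt_le_sol_cost) (auto simp: lbflo_feasible_def)
  also have "\<dots> = (\<Sum>i\<in>OF. f i) + \<delta> * (\<Sum>i\<in>OF. \<Sum>j\<in>N i. c i j) + conn"
    by (simp add: sol_cost_def f'_def conn_def sum.distrib sum_distrib_left)
  also have "\<dots> \<le> (\<Sum>i\<in>OF. f i) + \<delta> * conn + conn"
    using lbflo_feasible_nearest_sum_le_connection_cost[OF assms(1,2,4) feasible assms(7)] assms(6)
    by (simp add: conn_def mult_left_mono)
  also have "\<dots> \<le> (1 + \<delta>) * sol_cost f c OF OA O\<sigma>"
    using assms(3,6) \<open>OF \<subseteq> F\<close> by (simp add: sol_cost_def conn_def algebra_simps sum_nonneg subset_iff)
  finally show ?thesis
    by (simp add: f'_def)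
qed

end
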